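(* Let $\mathbf C$ satisfy (C1)–(C4) as in the context. Then $\mathcal M_1^{\mathcal X,\mathcal T}(\mathbf C)$ is non-empty. Further, the market comprising the stock, the bond and the call options (trading at the prices $\mathbf C$) is arbitrage free.
   Context: Fix integers $N\ge1$, $J\ge1$, times $0=t_0<t_1<\dots<t_N=T$, $\mathcal T=\{t_1,\dots,t_N\}$, an initial discounted stock price $s_0>0$, strikes $0<x_1<\dots<x_J$, $x_0=0$, $\mathcal X=\{x_0,\dots,x_J\}$. Interest rates are zero after discounting. $\mathbf C=(c_{j,n})_{0\le j\le J,1\le n\le N}$, with $c_{0,n}=s_0$, is the matrix of prices of the calls paying $(X_{t_n}-x_j)^+$ at $t_n$, and satisfies: (C1) $s_0=c_{0,n}\ge c_{1,n}\ge\dots\ge c_{J,n}\ge0$; (C2) $1\ge\frac{c_{0,n}-c_{1,n}}{x_1}\ge\frac{c_{1,n}-c_{2,n}}{x_2-x_1}\ge\dots\ge\frac{c_{J-1,n}-c_{J,n}}{x_J-x_{J-1}}$; (C3) $c_{j,n+1}\ge c_{j,n}$ for $1\le n\le N-1$; (C4) $c_{J,N}=0$. Set $p_{0,n}=1-\frac{s_0-c_{1,n}}{x_1}$, $p_{j,n}=\frac{c_{j-1,n}-c_{j,n}}{x_j-x_{j-1}}-\frac{c_{j,n}-c_{j+1,n}}{x_{j+1}-x_j}$ ($1\le j<J$), $p_{J,n}=\frac{c_{J-1,n}-c_{J,n}}{x_J-x_{J-1}}$. $\mathcal M^{\mathcal X,\mathcal T}(\mathbf C)$ is the set of models: a filtered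 probability space $(\mathcal F_{t_n})_{0\le n\le N}$ with an adapted martingale $(X_{t_n})_{0\le n\le N}$, $X_{t_0}=s_0$, $X_{t_n}\in\mathcal X$ and $\mathbb P(X_{t_n}=x_j)=p_{j,n}$ for $n\ge1$ (equivalently $\mathbb E[(X_{t_n}-x_j)^+]=c_{j,n}$). $\mathcal M_1^{\mathcal X,\mathcal T}(\mathbf C)$ is the subset of those models in which $X$ is Markov: $\mathbb P(X_{t_{n+1}}=x_k\mid\mathcal F_{t_n})=\mathbb P(X_{t_{n+1}}=x_k\mid X_{t_n})$. *)

theory Defs
  imports "HOL-Probability.Probability"
begin

text \<open>Strikes: x 0 = 0 < x 1 < ... < x J. Call prices: c j n for 0 <= j <= J, 1 <= n <= N.\<close>

definition conds_C :: "nat \<Rightarrow> nat \<Rightarrow> real \<Rightarrow> (nat \<Rightarrow> real) \<Rightarrow> (nat \<Rightarrow> nat \<Rightarrow> real) \<Rightarrow> bool" where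
  "conds_C N J s0 x c \<longleftrightarrow>
     \<comment> \<open>c_{0,n} = s0\<close>
     (\<forall>n\<in>{1..N}. c 0 n = s0) \<and>
     \<comment> \<open>(C1)\<close>
     (\<forall>n\<in>{1..N}. (\<forall>j<J. c j n \<ge> c (j+1) n) \<and> c J n \<ge> 0) \<and>
     \<comment> \<open>(C2)\<close>
     (\<forall>n\<in>{1..N}. 1 \<ge> (c 0 n - c 1 n) / x 1 \<and>
        (\<forall>j. 1 \<le> j \<and> j < J \<longrightarrow>
           (c (j-1) n - c j n) / (x j - x (j-1)) \<ge> (c j n - c (j+1) n) / (x (j+1) - x j))) \<and>
     \<comment> \<open>(C3)\<close>
     (\<forall>n. 1 \<le> n \<and> n < N \<longrightarrow> (\<forall>j\<le>J. c j (n+1) \<ge> c j n)) \<and>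
     \<comment> \<open>(C4)\<close>
     c J N = 0"

definition pmarg :: "nat \<Rightarrow> (nat \<Rightarrow> real) \<Rightarrow> (nat \<Rightarrow> nat \<Rightarrow> real) \<Rightarrow> nat \<Rightarrow> nat \<Rightarrow> real" where
  "pmarg J x c j n =
     (if j = 0 then 1 - (c 0 n - c 1 n) / x 1
      else if j < J then (c (j-1) n - c j n) / (x j - x (j-1)) - (c j n - c (j+1) n) / (x (j+1) - x j)
      else (c (J-1) n - c J n) / (x J - x (J-1)))"

text \<open>A model in M^{X,T}(C): probability space M, filtration (F n)_{0<=n<=N} (F n corresponds
  to F_{t_n}), adapted martingale (X n)_{0<=n<=N} (X n corresponds to X_{t_n}).\<close>
definition is_model :: "nat \<Rightarrow> nat \<Rightarrow> real \<Rightarrow> (nat \<Rightarrow> real) \<Rightarrow> (nat \<Rightarrow> nat \<Rightarrow> real)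
    \<Rightarrow> 'a measure \<Rightarrow> (nat \<Rightarrow> 'a measure) \<Rightarrow> (nat \<Rightarrow> 'a \<Rightarrow> real) \<Rightarrow> bool" where
  "is_model N J s0 x c M F X \<longleftrightarrow>
     prob_space M \<and>
     (\<forall>n\<le>N. subalgebra M (F n)) \<and>
     (\<forall>n m. n \<le> m \<and> m \<le> N \<longrightarrow> sets (F n) \<subseteq> sets (F m)) \<and>
     (\<forall>n\<le>N. X n \<in> borel_measurable (F n)) \<and>
     (\<forall>n\<le>N. integrable M (X n)) \<and>
     (\<forall>\<omega>\<in>space M. X 0 \<omega> = s0) \<and>
     (\<forall>n\<in>{1..N}. \<forall>\<omega>\<in>space M. X n \<omega> \<in> x ` {0..J}) \<and>
     (\<forall>n\<in>{1..N}. \<forall>j\<le>J. measure M {\<omega>\<in>space M. X n \<omega> = x j} = pmarg J x c j n) \<and>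
     (\<forall>n<N. AE \<omega> in M. real_cond_exp M (F n) (X (n+1)) \<omega> = X n \<omega>)"

definition is_markov_model :: "nat \<Rightarrow> nat \<Rightarrow> real \<Rightarrow> (nat \<Rightarrow> real) \<Rightarrow> (nat \<Rightarrow> nat \<Rightarrow> real)
    \<Rightarrow> 'a measure \<Rightarrow> (nat \<Rightarrow> 'a measure) \<Rightarrow> (nat \<Rightarrow> 'a \<Rightarrow> real) \<Rightarrow> bool" where
  "is_markov_model N J s0 x c M F X \<longleftrightarrow>
     is_model N J s0 x c M F X \<and>
     (\<forall>n<N. \<forall>k\<le>J. AE \<omega> in M.
        real_cond_exp M (F n) (indicator {\<omega>\<in>space M. X (n+1) \<omega> = x k}) \<omega> =
        real_cond_exp M (vimage_algebra (space M) (X n) borel)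
          (indicator {\<omega>\<in>space M. X (n+1) \<omega> = x k}) \<omega>)"

definition is_path :: "nat \<Rightarrow> nat \<Rightarrow> real \<Rightarrow> (nat \<Rightarrow> real) \<Rightarrow> (nat \<Rightarrow> real) \<Rightarrow> bool" where
  "is_path N J s0 x \<omega> \<longleftrightarrow> \<omega> 0 = s0 \<and> (\<forall>n\<in>{1..N}. \<omega> n \<in> x ` {0..J})"

text \<open>Self-financing semi-static strategy: static positions lam j n in the calls (bought at price
  c j n, financed with the bond), and a non-anticipative dynamic stock holding Delta n
  over [t_n, t_{n+1}) depending on the price history up to t_n. Discounted net gain:\<close>
definition gain :: "nat \<Rightarrow> nat \<Rightarrow> (nat \<Rightarrow> real) \<Rightarrow> (nat \<Rightarrow> nat \<Rightarrow> real) \<Rightarrow> (nat \<Rightarrow> nat \<Rightarrow> real)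
    \<Rightarrow> (nat \<Rightarrow> (nat \<Rightarrow> real) \<Rightarrow> real) \<Rightarrow> (nat \<Rightarrow> real) \<Rightarrow> real" where
  "gain N J x c lam Delta \<omega> =
     (\<Sum>n\<in>{1..N}. \<Sum>j\<in>{0..J}. lam j n * (max (\<omega> n - x j) 0 - c j n))
     + (\<Sum>n<N. Delta n \<omega> * (\<omega> (n+1) - \<omega> n))"

definition nonanticipative :: "(nat \<Rightarrow> (nat \<Rightarrow> real) \<Rightarrow> real) \<Rightarrow> bool" where
  "nonanticipative Delta \<longleftrightarrow>
     (\<forall>n \<omega> \<omega>'. (\<forall>i\<le>n. \<omega> i = \<omega>' i) \<longrightarrow> Delta n \<omega> = Delta n \<omega>')"

definition arbitrage_free :: "nat \<Rightarrow> nat \<Rightarrow> real \<Rightarrow> (nat \<Rightarrow> real) \<Rightarrow> (nat \<Rightarrow> nat \<Rightarrow> real) \<Rightarrow> bool" where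
  "arbitrage_free N J s0 x c \<longleftrightarrow>
     \<not> (\<exists>lam Delta. nonanticipative Delta \<and>
          (\<forall>\<omega>. is_path N J s0 x \<omega> \<longrightarrow> gain N J x c lam Delta \<omega> > 0))"

end

theory Submission
  imports Defs
begin

text \<open>The call prices of maturity t_n determine a distribution on the strike grid (the second
  differences of the call price curve) whose call prices are exactly c_{.,n}; (C1)-(C2) make it a
  probability with mean s0, and (C3) says that these marginals increase in convex order.
  A discrete Strassen theorem then yields martingale transition kernels between consecutive
  marginals: as long as two marginals p, q differ, there are strikes x_i < x_j < x_k at which
  p - q is negative, positive, negative, with p - q nonnegative strictly between x_i and x_k, and
  moving mass of p from x_j to x_i and x_k without changing its barycentre keeps p below q in
  convex order while removing one of these three differences. The Markov chain with these
  kernels is a Markov model. Under it every zero-cost semi-static strategy has zero expected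
  gain, so no strategy has strictly positive gain on every price path.\<close>

section \<open>Convex order on a strike grid and a discrete Strassen theorem\<close>

lemma call_payoff_le_chord:
  fixes u v y z d :: real
  assumes "u < v" "u \<le> y" "y \<le> v" "0 \<le> d \<or> z \<le> u \<or> v \<le> z"
  defines "l \<equiv> (v - y) / (v - u)"
  shows "d * max (z - y) 0 \<le> l * (d * max (z - u) 0) + (1 - l) * (d * max (z - v) 0)"
proof -
  have l: "0 \<le> l" "l \<le> 1" using assms(1-3) unfolding l_def by (auto simp: field_simps)
  have "l * (v - u) = v - y" using assms(1) unfolding l_def by simp
  hence y: "y = l * u + (1 - l) * v" by (simp add: algebra_simps)
  have z: "z - y = l * (z - u) + (1 - l) * (z - v)" using y by (simp add: algebra_simps)
  show ?thesis
  proof (cases "0 \<le> d")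
    case True
    have "max (z - y) 0 \<le> l * max (z - u) 0 + (1 - l) * max (z - v) 0"
      unfolding z using l by (intro max.boundedI add_mono mult_left_mono add_nonneg_nonneg) auto
    from mult_left_mono[OF this True] show ?thesis by (simp add: algebra_simps)
  next
    case False
    then consider "z \<le> u" | "v \<le> z" using assms(4) by linarith
    then show ?thesis
    proof cases
      case 1 thus ?thesis using assms(1-3) by simp
    next
      case 2
      have "d * (z - y) = l * (d * (z - u)) + (1 - l) * (d * (z - v))"
        unfolding z by (simp add: algebra_simps)
      with 2 show ?thesis using assms(1-3) by simp
    qed
  qed
qed

lemma exists_maximal_transfer:
  fixes a b d w :: real
  assumes "0 < a" "0 < d" "0 < b" "0 < w" "w < 1"
  obtains e where "0 < e" "e \<le> d" "e * w \<le> a" "e * (1 - w) \<le> b"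
    "e = d \<or> e * w = a \<or> e * (1 - w) = b"
proof -
  define e where "e = min d (min (a / w) (b / (1 - w)))"
  have "0 < e" using assms by (simp add: e_def)
  moreover have "e \<le> d" "e * w \<le> a" "e * (1 - w) \<le> b"
    using assms by (simp_all add: e_def pos_le_divide_eq[symmetric])
  moreover have "e = d \<or> e * w = a \<or> e * (1 - w) = b"
    using assms by (auto simp: e_def min_def)
  ultimately show thesis by (rule that)
qed

locale strict_grid =
  fixes J :: nat and x :: "nat \<Rightarrow> real"
  assumes x_less: "i < j \<Longrightarrow> j \<le> J \<Longrightarrow> x i < x j"
begin

lemma x_le: "i \<le> j \<Longrightarrow> j \<le> J \<Longrightarrow> x i \<le> x j"
  using x_less by (metis le_less)

lemma x_eq_iff: "i \<le> J \<Longrightarrow> j \<le> J \<Longrightarrow> x i = x j \<longleftrightarrow> i = j"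
  using x_less by (metis less_irrefl nat_neq_iff)

definition call :: "(nat \<Rightarrow> real) \<Rightarrow> real \<Rightarrow> real" where
  "call p y = (\<Sum>m\<le>J. p m * max (x m - y) 0)"

definition put :: "(nat \<Rightarrow> real) \<Rightarrow> real \<Rightarrow> real" where
  "put p y = (\<Sum>m\<le>J. p m * max (y - x m) 0)"

definition mean :: "(nat \<Rightarrow> real) \<Rightarrow> real" where
  "mean p = (\<Sum>m\<le>J. p m * x m)"

lemma put_call_parity: "put p y = call p y + y * sum p {..J} - mean p"
proof -
  have "put p y = (\<Sum>m\<le>J. p m * max (x m - y) 0 + y * p m - p m * x m)"
    unfolding put_def by (rule sum.cong) (auto simp: max_def algebra_simps)
  thus ?thesis
    by (simp add: call_def mean_def sum.distrib sum_subtractf sum_distrib_left)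
qed

lemma call_diff: "call (\<lambda>m. p m - q m) y = call p y - call q y"
  by (simp add: call_def sum_subtractf left_diff_distrib)

lemma mean_diff: "mean (\<lambda>m. p m - q m) = mean p - mean q"
  by (simp add: mean_def sum_subtractf left_diff_distrib)

definition convex_le :: "(nat \<Rightarrow> real) \<Rightarrow> (nat \<Rightarrow> real) \<Rightarrow> bool" where
  "convex_le p q \<longleftrightarrow> sum p {..J} = sum q {..J} \<and> mean p = mean q \<and>
     (\<forall>l\<le>J. call p (x l) \<le> call q (x l))"

definition martingale_kernel :: "(nat \<Rightarrow> nat \<Rightarrow> real) \<Rightarrow> bool" where
  "martingale_kernel K \<longleftrightarrow>
     (\<forall>i\<le>J. (\<forall>m\<le>J. 0 \<le> K i m) \<and> (\<Sum>m\<le>J. K i m) = 1 \<and> (\<Sum>m\<le>J. K i m * x m) = x i)"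

definition transport :: "(nat \<Rightarrow> real) \<Rightarrow> (nat \<Rightarrow> nat \<Rightarrow> real) \<Rightarrow> nat \<Rightarrow> real" where
  "transport p K m = (\<Sum>i\<le>J. p i * K i m)"

definition kernel_comp :: "(nat \<Rightarrow> nat \<Rightarrow> real) \<Rightarrow> (nat \<Rightarrow> nat \<Rightarrow> real) \<Rightarrow> nat \<Rightarrow> nat \<Rightarrow> real" where
  "kernel_comp K L i m = (\<Sum>l\<le>J. K i l * L l m)"

lemma sum_of_bool_mult: "i \<le> J \<Longrightarrow> (\<Sum>m\<le>J. of_bool (m = i) * f m) = (f i :: real)"
  by (simp add: of_bool_def if_distrib[where f="\<lambda>a. a * _"] cong: if_cong)

lemma martingale_kernel_id: "martingale_kernel (\<lambda>i m. of_bool (m = i))"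
  unfolding martingale_kernel_def using sum_of_bool_mult[of _ "\<lambda>_. 1"] by (simp add: sum_of_bool_mult)

lemma transport_id: "m \<le> J \<Longrightarrow> transport p (\<lambda>i m. of_bool (m = i)) m = p m"
  unfolding transport_def by (simp add: mult.commute[of "p _"] eq_commute[of _ m] sum_of_bool_mult)

lemma martingale_kernel_comp:
  assumes K: "martingale_kernel K" and L: "martingale_kernel L"
  shows "martingale_kernel (kernel_comp K L)"
  unfolding martingale_kernel_def
proof (intro allI impI conjI)
  fix i assume i: "i \<le> J"
  have K': "\<forall>l\<le>J. 0 \<le> K i l" "(\<Sum>l\<le>J. K i l) = 1" "(\<Sum>l\<le>J. K i l * x l) = x i"
    using K i unfolding martingale_kernel_def by blast+
  have L': "\<forall>l\<le>J. (\<forall>m\<le>J. 0 \<le> L l m) \<and> (\<Sum>m\<le>J. L l m) = 1 \<and> (\<Sum>m\<le>J. L l m * x m) = x l"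
    using L unfolding martingale_kernel_def by blast
  show "0 \<le> kernel_comp K L i m" if "m \<le> J" for m
    unfolding kernel_comp_def using K'(1) L' that by (intro sum_nonneg mult_nonneg_nonneg) auto
  have "(\<Sum>m\<le>J. kernel_comp K L i m) = (\<Sum>l\<le>J. K i l * (\<Sum>m\<le>J. L l m))"
    unfolding kernel_comp_def sum_distrib_left by (rule sum.swap)
  also have "\<dots> = 1" using K'(2) L' by simp
  finally show "(\<Sum>m\<le>J. kernel_comp K L i m) = 1" .
  have "(\<Sum>m\<le>J. kernel_comp K L i m * x m) = (\<Sum>l\<le>J. K i l * (\<Sum>m\<le>J. L l m * x m))"
    unfolding kernel_comp_def sum_distrib_left sum_distrib_right mult.assoc by (rule sum.swap)
  also have "\<dots> = x i" using K'(3) L' by simp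
  finally show "(\<Sum>m\<le>J. kernel_comp K L i m * x m) = x i" .
qed

lemma transport_comp: "transport (transport p K) L = transport p (kernel_comp K L)"
  unfolding transport_def kernel_comp_def
  by (simp add: sum_distrib_left sum_distrib_right mult.assoc) (rule ext, rule sum.swap)

lemma transport_nonneg:
  "martingale_kernel K \<Longrightarrow> (\<And>i. i \<le> J \<Longrightarrow> 0 \<le> p i) \<Longrightarrow> m \<le> J \<Longrightarrow> 0 \<le> transport p K m"
  unfolding transport_def martingale_kernel_def by (auto intro!: sum_nonneg)

lemma martingale_kernel_transport:
  assumes "martingale_kernel K"
  shows "sum (transport p K) {..J} = sum p {..J}" "mean (transport p K) = mean p"
proof -
  have K: "(\<Sum>m\<le>J. K i m) = 1" "(\<Sum>m\<le>J. K i m * x m) = x i" if "i \<le> J" for i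
    using assms that unfolding martingale_kernel_def by blast+
  have "sum (transport p K) {..J} = (\<Sum>i\<le>J. p i * (\<Sum>m\<le>J. K i m))"
    unfolding transport_def sum_distrib_left by (rule sum.swap)
  thus "sum (transport p K) {..J} = sum p {..J}" using K(1) by simp
  have "mean (transport p K) = (\<Sum>i\<le>J. p i * (\<Sum>m\<le>J. K i m * x m))"
    unfolding mean_def transport_def sum_distrib_left sum_distrib_right mult.assoc by (rule sum.swap)
  thus "mean (transport p K) = mean p" using K(2) by (simp add: mean_def)
qed

definition chord_weight :: "nat \<Rightarrow> nat \<Rightarrow> nat \<Rightarrow> real" where
  "chord_weight i l k = (x k - x l) / (x k - x i)"

lemma chord_weight_interpolates:
  assumes "i < k" "k \<le> J"
  shows "chord_weight i l k * x i + (1 - chord_weight i l k) * x k = x l"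
proof -
  have "chord_weight i l k * (x k - x i) = x k - x l"
    using x_less[OF assms] unfolding chord_weight_def by simp
  thus ?thesis by (simp add: algebra_simps)
qed

lemma chord_weight_bounds:
  "i < l \<Longrightarrow> l < k \<Longrightarrow> k \<le> J \<Longrightarrow> 0 < chord_weight i l k \<and> chord_weight i l k < 1"
  using x_less[of i l] x_less[of l k] unfolding chord_weight_def by (simp add: field_simps)

lemma call_le_chord:
  assumes ik: "i \<le> l" "l \<le> k" "i < k" "k \<le> J" and D: "\<And>m. i < m \<Longrightarrow> m < k \<Longrightarrow> 0 \<le> D m"
  shows "call D (x l) \<le> chord_weight i l k * call D (x i) + (1 - chord_weight i l k) * call D (x k)"
proof -
  have "call D (x l) \<le> (\<Sum>m\<le>J. chord_weight i l k * (D m * max (x m - x i) 0)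
          + (1 - chord_weight i l k) * (D m * max (x m - x k) 0))"
    unfolding call_def chord_weight_def
  proof (intro sum_mono call_payoff_le_chord)
    fix m assume "m \<in> {..J}"
    then show "0 \<le> D m \<or> x m \<le> x i \<or> x k \<le> x m"
      using D x_le[of m i] x_le[of k m] ik by (cases "i < m \<and> m < k") auto
  qed (use ik x_less x_le in auto)
  thus ?thesis by (simp add: call_def sum.distrib sum_distrib_left)
qed

definition split_move :: "nat \<Rightarrow> nat \<Rightarrow> nat \<Rightarrow> nat \<Rightarrow> real" where
  "split_move i j k m = chord_weight i j k * of_bool (m = i) + (1 - chord_weight i j k) * of_bool (m = k)
     - of_bool (m = j)"

definition split_kernel :: "nat \<Rightarrow> nat \<Rightarrow> nat \<Rightarrow> real \<Rightarrow> nat \<Rightarrow> nat \<Rightarrow> real" where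
  "split_kernel i j k \<theta> l m = of_bool (l = m) + \<theta> * of_bool (l = j) * split_move i j k m"

lemma sum_split_move:
  assumes "i \<le> J" "j \<le> J" "k \<le> J"
  shows "(\<Sum>m\<le>J. split_move i j k m * f m)
     = chord_weight i j k * f i + (1 - chord_weight i j k) * f k - f j"
proof -
  have "(\<Sum>m\<le>J. split_move i j k m * f m) = (\<Sum>m\<le>J. chord_weight i j k * (of_bool (m = i) * f m)
      + (1 - chord_weight i j k) * (of_bool (m = k) * f m) - of_bool (m = j) * f m)"
    by (rule sum.cong) (simp_all add: split_move_def algebra_simps)
  also have "\<dots> = chord_weight i j k * f i + (1 - chord_weight i j k) * f k - f j"
    using assms by (simp add: sum.distrib sum_subtractf sum_distrib_left[symmetric] sum_of_bool_mult)
  finally show ?thesis .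
qed

lemma sum_split_kernel:
  assumes "i \<le> J" "j \<le> J" "k \<le> J" "l \<le> J"
  shows "(\<Sum>m\<le>J. split_kernel i j k \<theta> l m * f m) = f l + \<theta> * of_bool (l = j) *
          (chord_weight i j k * f i + (1 - chord_weight i j k) * f k - f j)"
proof -
  have "(\<Sum>m\<le>J. split_kernel i j k \<theta> l m * f m)
      = (\<Sum>m\<le>J. of_bool (m = l) * f m + \<theta> * of_bool (l = j) * (split_move i j k m * f m))"
    by (rule sum.cong) (auto simp: split_kernel_def algebra_simps)
  also have "\<dots> = f l + \<theta> * of_bool (l = j) * (\<Sum>m\<le>J. split_move i j k m * f m)"
    using assms by (simp add: sum.distrib sum_distrib_left sum_of_bool_mult)
  finally show ?thesis using sum_split_move[OF assms(1-3)] by simp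
qed

lemma martingale_kernel_split:
  assumes ijk: "i < j" "j < k" "k \<le> J" and \<theta>: "0 \<le> \<theta>" "\<theta> \<le> 1"
  shows "martingale_kernel (split_kernel i j k \<theta>)"
  unfolding martingale_kernel_def
proof (intro allI impI conjI)
  fix l m assume "l \<le> J" "m \<le> J"
  show "0 \<le> split_kernel i j k \<theta> l m"
    using chord_weight_bounds[OF ijk] \<theta> ijk
    by (auto simp: split_kernel_def split_move_def of_bool_def)
next
  fix l assume "l \<le> J"
  then show "(\<Sum>m\<le>J. split_kernel i j k \<theta> l m) = 1"
    "(\<Sum>m\<le>J. split_kernel i j k \<theta> l m * x m) = x l"
    using sum_split_kernel[of i j k l \<theta> "\<lambda>_. 1"] sum_split_kernel[of i j k l \<theta> x]
      chord_weight_interpolates[of i k j] ijk by simp_all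
qed

lemma transport_split_kernel:
  assumes "j \<le> J" "m \<le> J"
  shows "transport p (split_kernel i j k \<theta>) m = p m + \<theta> * p j * split_move i j k m"
proof -
  have "transport p (split_kernel i j k \<theta>) m
      = (\<Sum>l\<le>J. of_bool (l = m) * p l + of_bool (l = j) * (\<theta> * p l * split_move i j k m))"
    unfolding transport_def by (rule sum.cong) (auto simp: split_kernel_def algebra_simps)
  thus ?thesis using assms by (simp add: sum.distrib sum_of_bool_mult)
qed

lemma call_split_nonpos:
  assumes ijk: "i < j" "j < k" "k \<le> J" and calls: "\<And>l. l \<le> J \<Longrightarrow> call D (x l) \<le> 0"
    and e: "0 \<le> e" "e \<le> D j" and D: "\<And>m. i < m \<Longrightarrow> m < k \<Longrightarrow> 0 \<le> D m" and l: "l \<le> J"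
  shows "call (\<lambda>m. D m + e * split_move i j k m) (x l) \<le> 0"
proof -
  define w where "w = chord_weight i j k"
  let ?D' = "\<lambda>m. D m + e * split_move i j k m"
  have shift: "call ?D' y = call D y
      + e * (w * max (x i - y) 0 + (1 - w) * max (x k - y) 0 - max (x j - y) 0)" for y
    using sum_split_move[of i j k "\<lambda>m. max (x m - y) 0"] ijk
    by (simp add: call_def w_def distrib_right sum.distrib sum_distrib_left[symmetric] mult.assoc)
  have outside: "call ?D' (x l) \<le> 0" if "l \<le> i \<or> k \<le> l" "l \<le> J" for l
  proof -
    have "w * max (x i - x l) 0 + (1 - w) * max (x k - x l) 0 = max (x j - x l) 0"
      using that(1)
    proof
      assume "l \<le> i"
      with x_le[of l i] x_le[of l j] x_le[of l k] ijk
      have "max (x i - x l) 0 = x i - x l" "max (x k - x l) 0 = x k - x l" "max (x j - x l) 0 = x j - x l"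
        by auto
      thus ?thesis using chord_weight_interpolates[of i k j] ijk by (simp add: w_def algebra_simps)
    next
      assume "k \<le> l"
      thus ?thesis using x_le[of k l] x_less[of i k] x_less[of j k] ijk that(2) by simp
    qed
    thus ?thesis using shift calls[OF that(2)] by simp
  qed
  show ?thesis
  proof (cases "l \<le> i \<or> k \<le> l")
    case True thus ?thesis using outside l by blast
  next
    case False
    define a where "a = chord_weight i l k"
    have a: "0 < a" "a < 1" using chord_weight_bounds[of i l k] False ijk by (auto simp: a_def)
    have "0 \<le> ?D' m" if "i < m" "m < k" for m
      using D[OF that] e that by (auto simp: split_move_def)
    then have "call ?D' (x l) \<le> a * call ?D' (x i) + (1 - a) * call ?D' (x k)"
      unfolding a_def using False ijk by (intro call_le_chord) auto
    also have "\<dots> \<le> 0"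
      using outside[of i] outside[of k] ijk a by (intro add_nonpos_nonpos mult_nonneg_nonpos) auto
    finally show ?thesis .
  qed
qed

lemma nonneg_sum_zero:
  "sum D {..J} = 0 \<Longrightarrow> (\<And>m. m \<le> J \<Longrightarrow> 0 \<le> D m) \<Longrightarrow> m \<le> J \<Longrightarrow> D m = (0::real)"
  using sum_nonneg_eq_0_iff[of "{..J}" D] by auto

lemma exists_negative_below:
  assumes sum0: "sum D {..J} = 0" and mean0: "mean D = 0"
    and calls: "\<And>l. l \<le> J \<Longrightarrow> call D (x l) \<le> 0" and j: "j \<le> J" "0 < D j"
  shows "\<exists>i<j. D i < 0"
proof (rule ccontr)
  assume "\<not> ?thesis"
  hence nonneg: "0 \<le> D m" if "m \<le> j" for m
    using that j(2) by (metis le_less less_le_not_le nle_le)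
  show False
  proof (cases "j = J")
    case True thus False using nonneg_sum_zero[OF sum0 nonneg] j by fastforce
  next
    case False
    let ?y = "x (Suc j)"
    have "D j * max (?y - x j) 0 \<le> put D ?y"
      unfolding put_def
    proof (rule member_le_sum)
      fix m assume "m \<in> {..J} - {j}"
      thus "0 \<le> D m * max (?y - x m) 0"
        using nonneg[of m] x_le[of "Suc j" m] by (cases "m \<le> j") auto
    qed (use j in auto)
    moreover have "put D ?y \<le> 0"
      using put_call_parity[of D ?y] calls[of "Suc j"] sum0 mean0 j False by simp
    moreover have "0 < D j * max (?y - x j) 0" using j x_less[of j "Suc j"] False by simp
    ultimately show False by linarith
  qed
qed

lemma exists_negative_above:
  assumes sum0: "sum D {..J} = 0" and calls: "\<And>l. l \<le> J \<Longrightarrow> call D (x l) \<le> 0"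
    and j: "j \<le> J" "0 < D j"
  shows "\<exists>k. j < k \<and> k \<le> J \<and> D k < 0"
proof (rule ccontr)
  assume "\<not> ?thesis"
  hence nonneg: "0 \<le> D m" if "j \<le> m" "m \<le> J" for m
    using that j(2) by (metis le_less not_less)
  show False
  proof (cases "j = 0")
    case True thus False using nonneg_sum_zero[OF sum0 nonneg] j by fastforce
  next
    case False
    let ?y = "x (j - 1)"
    have "D j * max (x j - ?y) 0 \<le> call D ?y"
      unfolding call_def
    proof (rule member_le_sum)
      fix m assume "m \<in> {..J} - {j}"
      thus "0 \<le> D m * max (x m - ?y) 0"
        using nonneg[of m] x_le[of m "j - 1"] j by (cases "j \<le> m") auto
    qed (use j in auto)
    moreover have "0 < D j * max (x j - ?y) 0" using j x_less[of "j - 1" j] False by simp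
    ultimately show False using calls[of "j - 1"] j by linarith
  qed
qed

lemma defect_sign_pattern:
  assumes sum0: "sum D {..J} = 0" and mean0: "mean D = 0"
    and calls: "\<And>l. l \<le> J \<Longrightarrow> call D (x l) \<le> 0" and m0: "m0 \<le> J" "D m0 \<noteq> 0"
  obtains i j k where "i < j" "j < k" "k \<le> J" "D i < 0" "0 < D j" "D k < 0"
    "\<And>m. i < m \<Longrightarrow> m < k \<Longrightarrow> 0 \<le> D m"
proof -
  have "\<exists>j\<le>J. 0 < D j"
  proof (rule ccontr)
    assume "\<not> ?thesis"
    hence "0 \<le> - D m" if "m \<le> J" for m using that by (simp add: not_less)
    from nonneg_sum_zero[of "\<lambda>m. - D m", OF _ this m0(1)] show False
      using sum0 m0(2) by (simp add: sum_negf)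
  qed
  then obtain j where j: "j \<le> J" "0 < D j" by blast
  define i where "i = (GREATEST i. i < j \<and> D i < 0)"
  define k where "k = (LEAST k. j < k \<and> k \<le> J \<and> D k < 0)"
  obtain i0 where i0: "i0 < j" "D i0 < 0" using exists_negative_below[OF sum0 mean0 calls j] by blast
  have i: "i < j \<and> D i < 0" unfolding i_def
    by (rule GreatestI_nat[where P = "\<lambda>i. i < j \<and> D i < 0" and k = i0 and b = j]) (use i0 in auto)
  have i_max: "m \<le> i" if "m < j" "D m < 0" for m
    unfolding i_def
    by (rule Greatest_le_nat[where P = "\<lambda>i. i < j \<and> D i < 0" and b = j]) (use that in auto)
  have k: "j < k \<and> k \<le> J \<and> D k < 0"
    unfolding k_def using exists_negative_above[OF sum0 calls j] by (rule LeastI_ex)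
  have k_min: "\<And>m. j < m \<Longrightarrow> m \<le> J \<Longrightarrow> D m < 0 \<Longrightarrow> k \<le> m"
    unfolding k_def by (auto intro: Least_le)
  have "0 \<le> D m" if "i < m" "m < k" for m
  proof (cases m j rule: linorder_cases)
    case less thus ?thesis using i_max[of m] that by (meson not_le not_less)
  next
    case equal thus ?thesis using j by simp
  next
    case greater
    thus ?thesis using k_min[of m] that k by (meson le_less_trans less_imp_le not_le not_less)
  qed
  with i j k that show thesis by blast
qed

lemma convex_le_split:
  assumes pq: "convex_le p q" and ijk: "i < j" "j < k" "k \<le> J"
    and \<theta>: "0 \<le> \<theta>" "\<theta> \<le> 1" "0 \<le> p j" "\<theta> * p j \<le> p j - q j" and mid: "\<And>m. i < m \<Longrightarrow> m < k \<Longrightarrow> q m \<le> p m"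
  shows "convex_le (transport p (split_kernel i j k \<theta>)) q"
  unfolding convex_le_def
proof (intro conjI allI impI)
  show "sum (transport p (split_kernel i j k \<theta>)) {..J} = sum q {..J}"
    "mean (transport p (split_kernel i j k \<theta>)) = mean q"
    using martingale_kernel_transport[OF martingale_kernel_split] pq ijk \<theta>
    by (simp_all add: convex_le_def)
  fix l assume "l \<le> J"
  have "call (transport p (split_kernel i j k \<theta>)) (x l) - call q (x l)
      = call (\<lambda>m. transport p (split_kernel i j k \<theta>) m - q m) (x l)"
    by (rule call_diff[symmetric])
  also have "\<dots> = call (\<lambda>m. (p m - q m) + \<theta> * p j * split_move i j k m) (x l)"
    unfolding call_def using ijk by (intro sum.cong) (auto simp: transport_split_kernel)
  also have "\<dots> \<le> 0"
    using ijk pq \<theta> mid \<open>l \<le> J\<close> by (intro call_split_nonpos) (auto simp: convex_le_def call_diff)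
  finally show "call (transport p (split_kernel i j k \<theta>)) (x l) \<le> call q (x l)" by simp
qed

lemma split_move_outside: "m \<noteq> i \<Longrightarrow> m \<noteq> j \<Longrightarrow> m \<noteq> k \<Longrightarrow> split_move i j k m = 0"
  by (simp add: split_move_def)

lemma split_defect_psubset:
  assumes ijk: "i < j" "j < k" and D: "D i \<noteq> 0" "D j \<noteq> 0" "D k \<noteq> 0" "k \<le> J"
    and e: "D j - e = 0 \<or> D i + e * chord_weight i j k = 0 \<or> D k + e * (1 - chord_weight i j k) = 0"
  shows "{m\<in>{..J}. D m + e * split_move i j k m \<noteq> 0} \<subset> {m\<in>{..J}. D m \<noteq> 0}"
proof -
  have "D m \<noteq> 0" if "D m + e * split_move i j k m \<noteq> 0" for m
    using that D split_move_outside[of m i j k] by (cases "m \<in> {i, j, k}") auto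
  hence sub: "{m\<in>{..J}. D m + e * split_move i j k m \<noteq> 0} \<subseteq> {m\<in>{..J}. D m \<noteq> 0}" by blast
  have "\<exists>r\<in>{i, j, k}. D r + e * split_move i j k r = 0"
    using e
  proof (elim disjE)
    assume "D j - e = 0" thus ?thesis using ijk by (intro bexI[of _ j]) (auto simp: split_move_def)
  next
    assume "D i + e * chord_weight i j k = 0"
    thus ?thesis using ijk by (intro bexI[of _ i]) (auto simp: split_move_def)
  next
    assume "D k + e * (1 - chord_weight i j k) = 0"
    thus ?thesis using ijk by (intro bexI[of _ k]) (auto simp: split_move_def)
  qed
  then obtain r where "r \<in> {i, j, k}" "D r + e * split_move i j k r = 0" by blast
  with D ijk have "r \<in> {m\<in>{..J}. D m \<noteq> 0} - {m\<in>{..J}. D m + e * split_move i j k m \<noteq> 0}" by auto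
  with sub show ?thesis by blast
qed

lemma convex_le_reduce_defect:
  assumes q: "\<And>m. m \<le> J \<Longrightarrow> 0 \<le> q m" and pq: "convex_le p q" and m0: "m0 \<le> J" "p m0 \<noteq> q m0"
  obtains T where "martingale_kernel T" "convex_le (transport p T) q"
    "{m\<in>{..J}. transport p T m \<noteq> q m} \<subset> {m\<in>{..J}. p m \<noteq> q m}"
proof -
  define D where "D m = p m - q m" for m
  have sum0: "sum D {..J} = 0" and mean0: "mean D = 0" and calls: "\<And>l. l \<le> J \<Longrightarrow> call D (x l) \<le> 0"
    using pq unfolding convex_le_def D_def by (auto simp: sum_subtractf mean_diff call_diff)
  obtain i j k where ijk: "i < j" "j < k" "k \<le> J" and Dijk: "D i < 0" "0 < D j" "D k < 0"
    and D_mid: "\<And>m. i < m \<Longrightarrow> m < k \<Longrightarrow> 0 \<le> D m"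
    using defect_sign_pattern[OF sum0 mean0 calls m0(1)] m0(2) unfolding D_def by auto
  define w where "w = chord_weight i j k"
  have w: "0 < w" "w < 1" using chord_weight_bounds[OF ijk] by (auto simp: w_def)
  obtain e where e: "0 < e" "e \<le> D j" "e * w \<le> - D i" "e * (1 - w) \<le> - D k"
    "e = D j \<or> e * w = - D i \<or> e * (1 - w) = - D k"
    by (rule exists_maximal_transfer[of "- D i" "D j" "- D k" w]) (use Dijk w in auto)
  have "0 < p j" using Dijk(2) q[of j] ijk by (simp add: D_def)
  define \<theta> where "\<theta> = e / p j"
  have \<theta>: "0 \<le> \<theta>" "\<theta> \<le> 1" "\<theta> * p j = e"
    using e \<open>0 < p j\<close> q[of j] ijk by (auto simp: \<theta>_def D_def field_simps)
  define T where "T = split_kernel i j k \<theta>"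
  have T: "martingale_kernel T" unfolding T_def using ijk \<theta> by (intro martingale_kernel_split) auto
  have p': "transport p T m - q m = D m + e * split_move i j k m" if "m \<le> J" for m
    using transport_split_kernel[of j m p i k \<theta>] that ijk \<theta>(3) by (simp add: T_def D_def)
  have convex: "convex_le (transport p T) q"
    unfolding T_def using pq ijk \<theta> e(2) D_mid \<open>0 < p j\<close> by (intro convex_le_split) (auto simp: D_def)
  have "{m\<in>{..J}. D m + e * split_move i j k m \<noteq> 0} \<subset> {m\<in>{..J}. D m \<noteq> 0}"
    using e(5) Dijk ijk by (intro split_defect_psubset) (auto simp: w_def)
  moreover have "transport p T m \<noteq> q m \<longleftrightarrow> D m + e * split_move i j k m \<noteq> 0" if "m \<le> J" for m
    using p'[OF that] by (metis eq_iff_diff_eq_0)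
  hence "{m\<in>{..J}. transport p T m \<noteq> q m} = {m\<in>{..J}. D m + e * split_move i j k m \<noteq> 0}" by blast
  moreover have "{m\<in>{..J}. p m \<noteq> q m} = {m\<in>{..J}. D m \<noteq> 0}" by (simp add: D_def)
  ultimately show thesis using T convex that by simp
qed

theorem convex_le_imp_martingale_kernel:
  assumes "\<And>m. m \<le> J \<Longrightarrow> 0 \<le> p m" "\<And>m. m \<le> J \<Longrightarrow> 0 \<le> q m" "convex_le p q"
  shows "\<exists>K. martingale_kernel K \<and> (\<forall>m\<le>J. transport p K m = q m)"
  using assms
proof (induction "card {m\<in>{..J}. p m \<noteq> q m}" arbitrary: p rule: less_induct)
  case less
  show ?case
  proof (cases "\<exists>m\<le>J. p m \<noteq> q m")
    case False
    thus ?thesis using martingale_kernel_id transport_id by auto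
  next
    case True
    then obtain m0 where "m0 \<le> J" "p m0 \<noteq> q m0" by blast
    with convex_le_reduce_defect[OF less.prems(2,3)] obtain T where T: "martingale_kernel T"
      "convex_le (transport p T) q" "{m\<in>{..J}. transport p T m \<noteq> q m} \<subset> {m\<in>{..J}. p m \<noteq> q m}"
      by blast
    have "card {m\<in>{..J}. transport p T m \<noteq> q m} < card {m\<in>{..J}. p m \<noteq> q m}"
      using T(3) by (intro psubset_card_mono) auto
    from less.hyps[OF this transport_nonneg[OF T(1) less.prems(1)] less.prems(2) T(2)]
    obtain K where "martingale_kernel K" "\<forall>m\<le>J. transport (transport p T) K m = q m" by blast
    thus ?thesis using martingale_kernel_comp[OF T(1)] by (auto simp: transport_comp)
  qed
qed

end

section \<open>The marginals implied by call prices\<close>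

locale call_prices =
  fixes N J :: nat and s0 :: real and x :: "nat \<Rightarrow> real" and c :: "nat \<Rightarrow> nat \<Rightarrow> real"
  assumes N_pos: "1 \<le> N" and J_pos: "1 \<le> J" and x0: "x 0 = 0"
    and x_step: "\<forall>j<J. x j < x (j+1)" and conds: "conds_C N J s0 x c"
begin

sublocale strict_grid J x
proof
  fix i j assume "i < j" "j \<le> J"
  then show "x i < x j"
  proof (induction j)
    case (Suc j)
    thus ?case using x_step by (cases "i = j") (auto intro: less_trans)
  qed simp
qed

lemma c_first: "n \<in> {1..N} \<Longrightarrow> c 0 n = s0"
  and c_antimono: "n \<in> {1..N} \<Longrightarrow> j < J \<Longrightarrow> c (j+1) n \<le> c j n"
  and c_last_nonneg: "n \<in> {1..N} \<Longrightarrow> 0 \<le> c J n"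
  and c_mono: "1 \<le> n \<Longrightarrow> n < N \<Longrightarrow> j \<le> J \<Longrightarrow> c j n \<le> c j (n+1)"
  and c_convex: "n \<in> {1..N} \<Longrightarrow> 1 \<ge> (c 0 n - c 1 n) / x 1"
    "n \<in> {1..N} \<Longrightarrow> 1 \<le> j \<Longrightarrow> j < J \<Longrightarrow>
       (c (j-1) n - c j n) / (x j - x (j-1)) \<ge> (c j n - c (j+1) n) / (x (j+1) - x j)"
  using conds unfolding conds_C_def by blast+

lemma c_last: assumes n: "n \<in> {1..N}" shows "c J n = 0"
proof -
  have "c J n \<le> c J m" if "n \<le> m" "m \<le> N" for m
    using that(1)
  proof (induction m rule: dec_induct)
    case (step m)
    thus ?case using c_mono[of m J] n that(2) by auto
  qed simp
  from this[of N] n have "c J n \<le> c J N" by simp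
  thus ?thesis using conds c_last_nonneg[OF n] unfolding conds_C_def by simp
qed

definition marginal :: "nat \<Rightarrow> nat \<Rightarrow> real" where
  "marginal n j = pmarg J x c j n"

text \<open>The left slope of the call price curve at x j, i.e. the probability of ending at or
  above x j.\<close>
definition slope :: "nat \<Rightarrow> nat \<Rightarrow> real" where
  "slope n j = (if j = 0 then 1 else if j \<le> J then (c (j-1) n - c j n) / (x j - x (j-1)) else 0)"

lemma marginal_eq_slope_diff: "j \<le> J \<Longrightarrow> marginal n j = slope n j - slope n (Suc j)"
  unfolding marginal_def pmarg_def slope_def using J_pos x0 by auto

lemma marginal_nonneg: assumes n: "n \<in> {1..N}" and j: "j \<le> J" shows "0 \<le> marginal n j"
proof -
  consider "j = 0" | "0 < j" "j < J" | "j = J" using j by linarith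
  then show ?thesis
  proof cases
    case 3
    have "c J n \<le> c (J - 1) n" using c_antimono[OF n, of "J - 1"] J_pos by simp
    thus ?thesis using 3 J_pos x_less[of "J - 1" J] by (simp add: marginal_def pmarg_def)
  qed (use c_convex[OF n] in \<open>auto simp: marginal_def pmarg_def\<close>)
qed

lemma sum_marginal: "sum (marginal n) {..J} = 1"
  using sum_telescope[of "slope n" J] by (simp add: marginal_eq_slope_diff slope_def)

lemma sum_marginal_above: "l < J \<Longrightarrow> (\<Sum>m\<le>J. of_bool (l < m) * marginal n m) = slope n (Suc l)"
proof -
  assume l: "l < J"
  have "{..J} = {..l} \<union> {Suc l..J}" "{..l} \<inter> {Suc l..J} = {}" "{..J} \<inter> {m. l < m} = {Suc l..J}"
    using l by auto
  hence "(\<Sum>m\<le>J. of_bool (l < m) * marginal n m) = sum (marginal n) {Suc l..J}"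
    by (simp add: of_bool_def if_distrib[where f="\<lambda>a. a * _"] sum.If_cases cong: if_cong)
  also have "\<dots> = sum (marginal n) {..J} - sum (marginal n) {..l}"
    using \<open>{..J} = _\<close> \<open>{..l} \<inter> _ = {}\<close> by (simp add: sum.union_disjoint)
  also have "sum (marginal n) {..l} = slope n 0 - slope n (Suc l)"
    using l sum_telescope[of "slope n" l] by (simp add: marginal_eq_slope_diff)
  finally show ?thesis by (simp add: sum_marginal slope_def)
qed

lemma call_marginal: assumes n: "n \<in> {1..N}" and l: "l \<le> J" shows "call (marginal n) (x l) = c l n"
  using l
proof (induction l rule: inc_induct)
  case base
  have "call (marginal n) (x J) = 0"
    unfolding call_def by (rule sum.neutral) (auto intro: x_le simp: max_def)
  thus ?case using c_last[OF n] by simp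
next
  case (step l)
  have "call (marginal n) (x l) = (\<Sum>m\<le>J. marginal n m * max (x m - x (Suc l)) 0
      + (x (Suc l) - x l) * (of_bool (l < m) * marginal n m))"
    unfolding call_def
  proof (rule sum.cong)
    fix m assume m: "m \<in> {..J}"
    show "marginal n m * max (x m - x l) 0 = marginal n m * max (x m - x (Suc l)) 0
      + (x (Suc l) - x l) * (of_bool (l < m) * marginal n m)"
      using x_le[of "Suc l" m] x_le[of m l] x_less[of l "Suc l"] m step
      by (cases "l < m") (auto simp: max_def algebra_simps)
  qed simp
  also have "\<dots> = call (marginal n) (x (Suc l))
      + (x (Suc l) - x l) * (\<Sum>m\<le>J. of_bool (l < m) * marginal n m)"
    by (simp only: sum.distrib sum_distrib_left call_def)
  also have "\<dots> = c (Suc l) n + (x (Suc l) - x l) * slope n (Suc l)"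
    using step sum_marginal_above by simp
  also have "(x (Suc l) - x l) * slope n (Suc l) = c l n - c (Suc l) n"
    using step x_less[of l "Suc l"] by (simp add: slope_def)
  finally show ?case by simp
qed

lemma mean_marginal: assumes n: "n \<in> {1..N}" shows "mean (marginal n) = s0"
proof -
  have "mean (marginal n) = call (marginal n) (x 0)"
    unfolding mean_def call_def using x_le[of 0] x0 by (intro sum.cong) auto
  thus ?thesis using call_marginal[OF n, of 0] c_first[OF n] by simp
qed

lemma convex_le_marginal: "1 \<le> n \<Longrightarrow> n < N \<Longrightarrow> convex_le (marginal n) (marginal (Suc n))"
  unfolding convex_le_def using sum_marginal mean_marginal call_marginal c_mono by simp

lemma marginal_kernel_exists:
  "1 \<le> n \<Longrightarrow> n < N \<Longrightarrow>
     \<exists>K. martingale_kernel K \<and> (\<forall>m\<le>J. transport (marginal n) K m = marginal (Suc n) m)"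
  by (intro convex_le_imp_martingale_kernel convex_le_marginal marginal_nonneg) auto

end

section \<open>Markov chains on price paths\<close>

lemma expectation_bind_pmf_finite:
  fixes f :: "'b \<Rightarrow> real"
  assumes "finite (set_pmf M)" "\<And>a. a \<in> set_pmf M \<Longrightarrow> finite (set_pmf (K a))"
  shows "measure_pmf.expectation (M \<bind> K) f
    = measure_pmf.expectation M (\<lambda>a. measure_pmf.expectation (K a) f)"
proof -
  have "measure_pmf.expectation (M \<bind> K) f
      = (\<Sum>a\<in>set_pmf M. pmf M a *\<^sub>R measure_pmf.expectation (K a) f)"
    using assms by (intro pmf_expectation_bind) auto
  also have "\<dots> = measure_pmf.expectation M (\<lambda>a. measure_pmf.expectation (K a) f)"
    using assms by (intro integral_measure_pmf[symmetric]) auto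
  finally show ?thesis .
qed

lemma expectation_pmf_pos:
  fixes f :: "'b \<Rightarrow> real"
  assumes "finite (set_pmf M)" "\<And>a. a \<in> set_pmf M \<Longrightarrow> 0 < f a"
  shows "0 < measure_pmf.expectation M f"
proof -
  have "measure_pmf.expectation M f = (\<Sum>a\<in>set_pmf M. f a * pmf M a)"
    by (rule integral_measure_pmf_real) (use assms in auto)
  also have "0 < \<dots>"
    by (rule sum_pos) (auto intro!: mult_pos_pos assms(2) pmf_positive simp: assms(1) set_pmf_not_empty)
  finally show ?thesis .
qed

definition depends_on_prefix :: "nat \<Rightarrow> ((nat \<Rightarrow> 'a) \<Rightarrow> 'b) \<Rightarrow> bool" where
  "depends_on_prefix m h \<longleftrightarrow> (\<forall>w w'. (\<forall>i\<le>m. w i = w' i) \<longrightarrow> h w = h w')"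

lemma depends_on_prefix_upd: "depends_on_prefix m h \<Longrightarrow> m < k \<Longrightarrow> h (w(k := v)) = h w"
  unfolding depends_on_prefix_def by auto

lemma depends_on_prefix_mult:
  "depends_on_prefix m \<psi> \<Longrightarrow> m \<le> n \<Longrightarrow> depends_on_prefix n (\<lambda>w. \<psi> w * f (w n))"
  unfolding depends_on_prefix_def by (metis order.trans order.refl)

locale finite_path_chain =
  fixes s0 :: 'a and S :: "'a set" and step :: "nat \<Rightarrow> 'a \<Rightarrow> 'a pmf"
  assumes finite_S: "finite S" and set_step: "set_pmf (step n v) \<subseteq> S"
begin

primrec path_law :: "nat \<Rightarrow> (nat \<Rightarrow> 'a) pmf" where
  "path_law 0 = return_pmf (\<lambda>_. s0)"
| "path_law (Suc n) = path_law n \<bind> (\<lambda>w. map_pmf (\<lambda>v. w(Suc n := v)) (step n (w n)))"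

lemma finite_step: "finite (set_pmf (step n v))"
  using finite_S set_step by (rule finite_subset[rotated])

lemma finite_path_law: "finite (set_pmf (path_law n))"
  by (induction n) (auto intro: finite_step)

lemma integrable_path_law [simp]: "integrable (measure_pmf (path_law n)) (f :: _ \<Rightarrow> real)"
  by (rule integrable_measure_pmf_finite[OF finite_path_law])

lemma path_law_support:
  "w \<in> set_pmf (path_law n) \<Longrightarrow> w 0 = s0 \<and> (\<forall>m. 1 \<le> m \<and> m \<le> n \<longrightarrow> w m \<in> S)"
proof (induction n arbitrary: w)
  case (Suc n)
  then obtain w0 v where w0: "w0 \<in> set_pmf (path_law n)" and v: "v \<in> set_pmf (step n (w0 n))"
    and w: "w = w0(Suc n := v)"
    by auto
  show ?case
    using Suc.IH[OF w0] set_step v unfolding w by (auto simp: le_Suc_eq)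
qed simp

lemma expectation_path_law_Suc:
  fixes h :: "(nat \<Rightarrow> 'a) \<Rightarrow> real"
  shows "measure_pmf.expectation (path_law (Suc n)) h = measure_pmf.expectation (path_law n)
     (\<lambda>w. measure_pmf.expectation (step n (w n)) (\<lambda>v. h (w(Suc n := v))))"
  by (simp add: expectation_bind_pmf_finite finite_path_law finite_step)

lemma expectation_path_law_prefix:
  fixes h :: "(nat \<Rightarrow> 'a) \<Rightarrow> real"
  assumes "depends_on_prefix m h" "m \<le> n"
  shows "measure_pmf.expectation (path_law n) h = measure_pmf.expectation (path_law m) h"
  using assms(2)
proof (induction n rule: dec_induct)
  case (step n)
  have "h (w(Suc n := v)) = h w" for w v
    using depends_on_prefix_upd[OF assms(1)] step by simp
  thus ?case using step.IH by (simp add: expectation_path_law_Suc del: path_law.simps)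
qed simp

lemma expectation_path_law_step:
  fixes \<psi> :: "(nat \<Rightarrow> 'a) \<Rightarrow> real" and f :: "'a \<Rightarrow> real"
  assumes n: "n < k" and \<psi>: "depends_on_prefix n \<psi>"
  shows "measure_pmf.expectation (path_law k) (\<lambda>w. \<psi> w * f (w (Suc n)))
       = measure_pmf.expectation (path_law k) (\<lambda>w. \<psi> w * measure_pmf.expectation (step n (w n)) f)"
proof -
  have "measure_pmf.expectation (path_law k) (\<lambda>w. \<psi> w * f (w (Suc n)))
      = measure_pmf.expectation (path_law (Suc n)) (\<lambda>w. \<psi> w * f (w (Suc n)))"
    using n by (intro expectation_path_law_prefix depends_on_prefix_mult[OF \<psi>]) auto
  also have "\<dots> = measure_pmf.expectation (path_law n)
      (\<lambda>w. \<psi> w * measure_pmf.expectation (step n (w n)) f)"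
    using depends_on_prefix_upd[OF \<psi>] by (simp add: expectation_path_law_Suc del: path_law.simps)
  also have "\<dots> = measure_pmf.expectation (path_law k)
      (\<lambda>w. \<psi> w * measure_pmf.expectation (step n (w n)) f)"
    using n by (intro expectation_path_law_prefix[symmetric] depends_on_prefix_mult[OF \<psi>]) auto
  finally show ?thesis .
qed

lemma expectation_path_law_next:
  fixes f :: "'a \<Rightarrow> real"
  assumes "n < k"
  shows "measure_pmf.expectation (path_law k) (\<lambda>w. f (w (Suc n)))
       = measure_pmf.expectation (path_law k) (\<lambda>w. measure_pmf.expectation (step n (w n)) f)"
  using expectation_path_law_step[OF assms, of "\<lambda>_. 1" f] by (simp add: depends_on_prefix_def)

end

definition prefix_algebra :: "nat \<Rightarrow> (nat \<Rightarrow> 'a) measure" where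
  "prefix_algebra n = vimage_algebra UNIV (\<lambda>w. restrict w {..n}) (count_space UNIV)"

lemma space_prefix_algebra [simp]: "space (prefix_algebra n) = UNIV"
  by (simp add: prefix_algebra_def)

lemma depends_on_prefix_vimage_indicator:
  fixes X :: "(nat \<Rightarrow> 'a) \<Rightarrow> 'b"
  assumes "depends_on_prefix n X" "space M = UNIV" "A \<in> sets (vimage_algebra UNIV X M)"
  shows "depends_on_prefix n (indicator A :: _ \<Rightarrow> real)"
proof -
  obtain B where A: "A = X -` B \<inter> UNIV" using assms(2,3) by (subst (asm) sets_vimage_algebra2) auto
  show ?thesis unfolding depends_on_prefix_def
  proof (intro allI impI)
    fix w w' :: "nat \<Rightarrow> 'a" assume "\<forall>i\<le>n. w i = w' i"
    hence "X w = X w'" using assms(1) unfolding depends_on_prefix_def by blast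
    thus "indicator A w = (indicator A w' :: real)" unfolding A by (simp add: indicator_def)
  qed
qed

lemma depends_on_prefix_restrict: "depends_on_prefix n (\<lambda>w. restrict w {..n})"
  unfolding depends_on_prefix_def by (auto simp: restrict_def)

lemma depends_on_prefix_prefix_algebra:
  "A \<in> sets (prefix_algebra n) \<Longrightarrow> depends_on_prefix n (indicator A :: _ \<Rightarrow> real)"
  unfolding prefix_algebra_def
  by (rule depends_on_prefix_vimage_indicator[OF depends_on_prefix_restrict space_count_space])

lemma measurable_prefix_algebra:
  fixes h :: "(nat \<Rightarrow> 'a) \<Rightarrow> real"
  assumes "depends_on_prefix n h"
  shows "h \<in> borel_measurable (prefix_algebra n)"
proof -
  have "(\<lambda>w. restrict w {..n}) \<in> measurable (prefix_algebra n) (count_space UNIV)"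
    unfolding prefix_algebra_def by (rule measurable_vimage_algebra1) simp
  from measurable_comp[OF this, of h borel]
  have "h \<circ> (\<lambda>w. restrict w {..n}) \<in> borel_measurable (prefix_algebra n)" by simp
  moreover have "h \<circ> (\<lambda>w. restrict w {..n}) = h"
    using assms unfolding depends_on_prefix_def by (auto simp: restrict_def)
  ultimately show ?thesis by simp
qed

lemma sets_prefix_algebra_mono:
  assumes "n \<le> m"
  shows "sets (prefix_algebra n :: (nat \<Rightarrow> 'a) measure) \<subseteq> sets (prefix_algebra m)"
proof
  fix A :: "(nat \<Rightarrow> 'a) set" assume "A \<in> sets (prefix_algebra n)"
  then obtain B where B: "A = (\<lambda>w. restrict w {..n}) -` B"
    by (auto simp: prefix_algebra_def sets_vimage_algebra2)
  have "(\<lambda>w. restrict w {..n}) = (\<lambda>w. restrict w {..n}) \<circ> (\<lambda>w :: nat \<Rightarrow> 'a. restrict w {..m})"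
    using assms by (intro ext) (auto simp: restrict_def)
  hence "A = (\<lambda>w. restrict w {..m}) -` ((\<lambda>w. restrict w {..n}) -` B) \<inter> UNIV"
    unfolding B by (metis Int_UNIV_right vimage_comp)
  also have "\<dots> \<in> sets (prefix_algebra m)"
    unfolding prefix_algebra_def by (rule in_vimage_algebra) simp
  finally show "A \<in> sets (prefix_algebra m)" .
qed

lemma real_cond_exp_pmf_charact:
  fixes R :: "'a pmf" and f g :: "'a \<Rightarrow> real"
  assumes fin: "finite (set_pmf R)" and space: "space G = UNIV" and g: "g \<in> borel_measurable G"
    and eq: "\<And>A. A \<in> sets G \<Longrightarrow>
      measure_pmf.expectation R (\<lambda>w. indicator A w * f w)
        = measure_pmf.expectation R (\<lambda>w. indicator A w * g w)"
  shows "AE w in measure_pmf R. real_cond_exp (measure_pmf R) G f w = g w"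
proof -
  interpret finite_measure_subalgebra "measure_pmf R" G
    unfolding finite_measure_subalgebra_def finite_measure_subalgebra_axioms_def subalgebra_def
    using space measure_pmf.finite_measure_axioms by simp
  show ?thesis
  proof (rule real_cond_exp_charact)
    fix A assume "A \<in> sets G"
    thus "(\<integral>w\<in>A. f w \<partial>measure_pmf R) = (\<integral>w\<in>A. g w \<partial>measure_pmf R)"
      unfolding set_lebesgue_integral_def using eq by simp
  qed (use g integrable_measure_pmf_finite[OF fin] in auto)
qed

lemma measurable_finite_range:
  fixes X :: "'a \<Rightarrow> real" and h :: "real \<Rightarrow> real"
  assumes X[measurable]: "X \<in> borel_measurable G" and "finite S" "\<And>w. w \<in> space G \<Longrightarrow> X w \<in> S"
  shows "(\<lambda>w. h (X w)) \<in> borel_measurable G"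
proof -
  have "h (X w) = (\<Sum>v\<in>S. h v * indicator {v} (X w))" if "w \<in> space G" for w
    using assms(2) assms(3)[OF that]
    by (simp add: indicator_def if_distrib[where f="\<lambda>a. _ * a"] cong: if_cong)
  moreover have "(\<lambda>w. \<Sum>v\<in>S. h v * indicator {v} (X w)) \<in> borel_measurable G" by measurable
  ultimately show ?thesis by (subst measurable_cong) auto
qed

section \<open>The Markov model and absence of arbitrage\<close>

context strict_grid
begin

definition grid_pmf :: "(nat \<Rightarrow> real) \<Rightarrow> real pmf" where
  "grid_pmf p = map_pmf x (embed_pmf (\<lambda>m. if m \<le> J then p m else 0))"

lemma
  assumes nonneg: "\<And>m. m \<le> J \<Longrightarrow> 0 \<le> p m" and sum: "sum p {..J} = 1"
  shows expectation_grid_pmf: "measure_pmf.expectation (grid_pmf p) f = (\<Sum>m\<le>J. p m * f (x m))"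
    and set_grid_pmf: "set_pmf (grid_pmf p) \<subseteq> x ` {..J}"
proof -
  define g where "g m = (if m \<le> J then p m else 0)" for m
  have g_nonneg: "\<And>m. 0 \<le> g m" using nonneg unfolding g_def by auto
  have "(\<integral>\<^sup>+m. ennreal (g m) \<partial>count_space UNIV) = (\<Sum>m\<le>J. ennreal (g m))"
    by (rule nn_integral_count_space') (auto simp: g_def)
  also have "\<dots> = ennreal (\<Sum>m\<le>J. g m)" using g_nonneg by (simp add: sum_ennreal)
  also have "(\<Sum>m\<le>J. g m) = 1" using sum by (simp add: g_def)
  finally have prob: "(\<integral>\<^sup>+m. ennreal (g m) \<partial>count_space UNIV) = 1" by simp
  have set: "set_pmf (embed_pmf g) \<subseteq> {..J}"
    unfolding set_embed_pmf[OF g_nonneg prob] by (auto simp: g_def split: if_splits)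
  have "measure_pmf.expectation (grid_pmf p) f = (\<Sum>m\<le>J. f (x m) * pmf (embed_pmf g) m)"
    unfolding grid_pmf_def g_def[symmetric] by (simp, rule integral_measure_pmf_real) (use set in auto)
  also have "\<dots> = (\<Sum>m\<le>J. p m * f (x m))"
    by (rule sum.cong) (auto simp: pmf_embed_pmf[OF g_nonneg prob] g_def)
  finally show "measure_pmf.expectation (grid_pmf p) f = (\<Sum>m\<le>J. p m * f (x m))" .
  show "set_pmf (grid_pmf p) \<subseteq> x ` {..J}" unfolding grid_pmf_def g_def[symmetric] using set by auto
qed

definition grid_index :: "real \<Rightarrow> nat" where
  "grid_index v = (if v \<in> x ` {..J} then inv_into {..J} x v else 0)"

lemma grid_index_le: "grid_index v \<le> J"
  using inv_into_into[of v x "{..J}"] unfolding grid_index_def by auto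

lemma grid_index_x: assumes "i \<le> J" shows "grid_index (x i) = i"
proof -
  have "inj_on x {..J}" by (rule inj_onI) (simp add: x_eq_iff)
  thus ?thesis unfolding grid_index_def using inv_into_f_f assms by auto
qed

text \<open>The price process reads paths through this projection, so that it takes grid values on
  every path and not only almost surely.\<close>
definition grid_proj :: "real \<Rightarrow> real" where
  "grid_proj v = (if v \<in> x ` {..J} then v else x 0)"

lemma grid_proj_x: "i \<le> J \<Longrightarrow> grid_proj (x i) = x i"
  by (auto simp: grid_proj_def)

lemma grid_proj_range: "grid_proj v \<in> x ` {..J}"
  by (auto simp: grid_proj_def)

end

context call_prices
begin

definition transition :: "nat \<Rightarrow> nat \<Rightarrow> nat \<Rightarrow> real" where
  "transition n = (if 1 \<le> n \<and> n < N
     then SOME K. martingale_kernel K \<and> (\<forall>m\<le>J. transport (marginal n) K m = marginal (Suc n) m)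
     else (\<lambda>i m. of_bool (m = i)))"

lemma martingale_kernel_transition: "martingale_kernel (transition n)"
  using someI_ex[OF marginal_kernel_exists] martingale_kernel_id by (simp add: transition_def)

lemma transport_transition:
  "1 \<le> n \<Longrightarrow> n < N \<Longrightarrow> m \<le> J \<Longrightarrow> transport (marginal n) (transition n) m = marginal (Suc n) m"
  using someI_ex[OF marginal_kernel_exists, of n] by (simp add: transition_def)

lemma transition_row:
  "i \<le> J \<Longrightarrow> m \<le> J \<Longrightarrow> 0 \<le> transition n i m"
  "i \<le> J \<Longrightarrow> sum (transition n i) {..J} = 1"
  "i \<le> J \<Longrightarrow> (\<Sum>m\<le>J. transition n i m * x m) = x i"
  using martingale_kernel_transition[of n] unfolding martingale_kernel_def by blast+

text \<open>At time 0 the stock jumps from s0 to the first marginal; afterwards it moves along the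
  martingale kernels, read off at the grid index of its current value.\<close>
definition step :: "nat \<Rightarrow> real \<Rightarrow> real pmf" where
  "step n v = (if n = 0 then grid_pmf (marginal 1) else grid_pmf (transition n (grid_index v)))"

lemma expectation_step_0: "measure_pmf.expectation (step 0 v) f = (\<Sum>m\<le>J. marginal 1 m * f (x m))"
  using marginal_nonneg[of 1] sum_marginal N_pos by (simp add: step_def expectation_grid_pmf)

lemma expectation_step:
  "0 < n \<Longrightarrow> measure_pmf.expectation (step n v) f = (\<Sum>m\<le>J. transition n (grid_index v) m * f (x m))"
  using transition_row grid_index_le by (simp add: step_def expectation_grid_pmf)

lemma set_step: "set_pmf (step n v) \<subseteq> x ` {..J}"
  using marginal_nonneg[of 1] sum_marginal N_pos transition_row grid_index_le
  by (simp add: step_def set_grid_pmf)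

sublocale finite_path_chain s0 "x ` {..J}" step
  by standard (auto simp: set_step)

lemma expectation_marginal:
  fixes h :: "real \<Rightarrow> real"
  assumes "1 \<le> n" "n \<le> N"
  shows "measure_pmf.expectation (path_law N) (\<lambda>w. h (w n)) = (\<Sum>i\<le>J. marginal n i * h (x i))"
  using assms
proof (induction n arbitrary: h rule: dec_induct)
  case base
  thus ?case using expectation_path_law_next[of 0 N h] by (simp add: expectation_step_0)
next
  case (step k)
  have "measure_pmf.expectation (path_law N) (\<lambda>w. h (w (Suc k)))
      = measure_pmf.expectation (path_law N) (\<lambda>w. \<Sum>m\<le>J. transition k (grid_index (w k)) m * h (x m))"
    using step expectation_path_law_next[of k N h] by (simp add: expectation_step)
  also have "\<dots> = (\<Sum>i\<le>J. marginal k i * (\<Sum>m\<le>J. transition k i m * h (x m)))"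
    using step step.IH[of "\<lambda>v. \<Sum>m\<le>J. transition k (grid_index v) m * h (x m)"]
    by (auto simp: grid_index_x intro!: sum.cong)
  also have "\<dots> = (\<Sum>m\<le>J. transport (marginal k) (transition k) m * h (x m))"
    unfolding transport_def sum_distrib_left sum_distrib_right mult.assoc by (rule sum.swap)
  also have "\<dots> = (\<Sum>m\<le>J. marginal (Suc k) m * h (x m))"
    using step by (simp add: transport_transition)
  finally show ?case .
qed

definition path_value :: "nat \<Rightarrow> (nat \<Rightarrow> real) \<Rightarrow> real" where
  "path_value n w = (if n = 0 then s0 else grid_proj (w n))"

lemma path_value_range: "path_value n w \<in> insert s0 (x ` {..J})"
  by (simp add: path_value_def grid_proj_range)

lemma depends_on_prefix_path_value: "depends_on_prefix n (path_value n)"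
  by (simp add: depends_on_prefix_def path_value_def)

lemma path_value_on_support: "w \<in> set_pmf (path_law N) \<Longrightarrow> n \<le> N \<Longrightarrow> path_value n w = w n"
  using path_law_support[of w N] by (auto simp: path_value_def grid_proj_def)

lemma expectation_step_on_support:
  assumes w: "w \<in> set_pmf (path_law N)" and n: "n < N" and f: "\<And>m. m \<le> J \<Longrightarrow> f (x m) = x m"
  shows "measure_pmf.expectation (step n (w n)) f = w n"
proof (cases "n = 0")
  case True
  have "measure_pmf.expectation (step n (w n)) f = mean (marginal 1)"
    using True f by (simp add: expectation_step_0 mean_def)
  thus ?thesis using True mean_marginal[of 1] N_pos path_law_support[OF w] by simp
next
  case False
  hence "w n \<in> x ` {..J}" using path_law_support[OF w] n by simp
  then obtain i where i: "i \<le> J" "w n = x i" by blast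
  have "measure_pmf.expectation (step n (w n)) f = (\<Sum>m\<le>J. transition n i m * x m)"
    using False i f by (simp add: expectation_step grid_index_x)
  thus ?thesis using transition_row(3)[OF i(1)] i(2) by simp
qed

text \<open>G may be any \<sigma>-algebra between \<sigma>(X_n) and the prefix \<sigma>-algebra at time n: the
  conditional expectation depends on X_n only, which is the Markov property.\<close>
lemma real_cond_exp_path_value_Suc:
  fixes f :: "real \<Rightarrow> real"
  assumes n: "n < N" and G: "space G = UNIV" "path_value n \<in> borel_measurable G"
    "\<And>A. A \<in> sets G \<Longrightarrow> depends_on_prefix n (indicator A :: _ \<Rightarrow> real)"
  shows "AE w in measure_pmf (path_law N).
    real_cond_exp (measure_pmf (path_law N)) G (\<lambda>w. f (path_value (Suc n) w)) w
      = measure_pmf.expectation (step n (path_value n w)) (\<lambda>v. f (grid_proj v))"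
proof (rule real_cond_exp_pmf_charact[OF finite_path_law G(1)])
  show "(\<lambda>w. measure_pmf.expectation (step n (path_value n w)) (\<lambda>v. f (grid_proj v))) \<in> borel_measurable G"
    using path_value_range
    by (intro measurable_finite_range[OF G(2), where S = "insert s0 (x ` {..J})"]) auto
  fix A assume "A \<in> sets G"
  have "measure_pmf.expectation (path_law N) (\<lambda>w. indicator A w * f (path_value (Suc n) w))
      = measure_pmf.expectation (path_law N) (\<lambda>w. indicator A w * f (grid_proj (w (Suc n))))"
    by (simp add: path_value_def)
  also have "\<dots> = measure_pmf.expectation (path_law N)
      (\<lambda>w. indicator A w * measure_pmf.expectation (step n (w n)) (\<lambda>v. f (grid_proj v)))"
    using n G(3)[OF \<open>A \<in> sets G\<close>] by (rule expectation_path_law_step)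
  also have "\<dots> = measure_pmf.expectation (path_law N)
      (\<lambda>w. indicator A w * measure_pmf.expectation (step n (path_value n w)) (\<lambda>v. f (grid_proj v)))"
    using n by (intro integral_cong_AE) (auto simp: AE_measure_pmf_iff path_value_on_support)
  finally show "measure_pmf.expectation (path_law N) (\<lambda>w. indicator A w * f (path_value (Suc n) w))
      = measure_pmf.expectation (path_law N)
      (\<lambda>w. indicator A w * measure_pmf.expectation (step n (path_value n w)) (\<lambda>v. f (grid_proj v)))" .
qed

lemma measure_path_value:
  assumes n: "n \<in> {1..N}" and j: "j \<le> J"
  shows "measure (measure_pmf (path_law N)) {w \<in> space (measure_pmf (path_law N)). path_value n w = x j}
    = marginal n j"
proof -
  have "measure (measure_pmf (path_law N)) {w \<in> space (measure_pmf (path_law N)). path_value n w = x j}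
      = measure_pmf.expectation (path_law N) (indicator {w. path_value n w = x j})"
    by simp
  also have "\<dots> = measure_pmf.expectation (path_law N) (\<lambda>w. indicator {x j} (grid_proj (w n)))"
    using n by (intro Bochner_Integration.integral_cong) (auto simp: path_value_def indicator_def)
  also have "\<dots> = (\<Sum>i\<le>J. marginal n i * indicator {x j} (grid_proj (x i)))"
    using n by (intro expectation_marginal) auto
  also have "\<dots> = (\<Sum>i\<le>J. of_bool (i = j) * marginal n i)"
    using j by (intro sum.cong) (auto simp: grid_proj_x x_eq_iff)
  also have "\<dots> = marginal n j" using j by (simp add: sum_of_bool_mult)
  finally show ?thesis .
qed

lemma real_cond_exp_prefix_algebra_path_value:
  "n < N \<Longrightarrow> AE w in measure_pmf (path_law N).
     real_cond_exp (measure_pmf (path_law N)) (prefix_algebra n) (\<lambda>w. f (path_value (Suc n) w)) w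
       = measure_pmf.expectation (step n (path_value n w)) (\<lambda>v. f (grid_proj v))"
  by (rule real_cond_exp_path_value_Suc)
    (auto intro: measurable_prefix_algebra depends_on_prefix_prefix_algebra depends_on_prefix_path_value)

lemma real_cond_exp_vimage_path_value:
  "n < N \<Longrightarrow> AE w in measure_pmf (path_law N).
     real_cond_exp (measure_pmf (path_law N)) (vimage_algebra UNIV (path_value n) borel)
       (\<lambda>w. f (path_value (Suc n) w)) w
       = measure_pmf.expectation (step n (path_value n w)) (\<lambda>v. f (grid_proj v))"
  by (rule real_cond_exp_path_value_Suc)
    (auto intro: measurable_vimage_algebra1
      depends_on_prefix_vimage_indicator[OF depends_on_prefix_path_value space_borel])

lemma martingale_path_value:
  assumes "n < N"
  shows "AE w in measure_pmf (path_law N).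
    real_cond_exp (measure_pmf (path_law N)) (prefix_algebra n) (path_value (n+1)) w = path_value n w"
proof -
  have "AE w in measure_pmf (path_law N).
      measure_pmf.expectation (step n (path_value n w)) grid_proj = path_value n w"
    using assms by (auto simp: AE_measure_pmf_iff path_value_on_support grid_proj_x
        intro!: expectation_step_on_support)
  with real_cond_exp_prefix_algebra_path_value[OF assms, of "\<lambda>v. v"] show ?thesis
    by eventually_elim simp
qed

lemma markov_path_value:
  fixes M defines "M \<equiv> measure_pmf (path_law N)"
  assumes "n < N"
  shows "AE w in M.
      real_cond_exp M (prefix_algebra n) (indicator {w \<in> space M. path_value (n+1) w = x k}) w
      = real_cond_exp M (vimage_algebra (space M) (path_value n) borel)
          (indicator {w \<in> space M. path_value (n+1) w = x k}) w"
proof -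
  have ind: "indicator {w \<in> space M. path_value (n+1) w = x k}
      = (\<lambda>w. indicator {x k} (path_value (Suc n) w) :: real)"
    by (auto simp: indicator_def M_def)
  show ?thesis
    using real_cond_exp_prefix_algebra_path_value[OF assms(2), of "indicator {x k}"]
      real_cond_exp_vimage_path_value[OF assms(2), of "indicator {x k}"]
    unfolding ind[symmetric] M_def by eventually_elim simp
qed

lemma markov_model: "is_markov_model N J s0 x c (measure_pmf (path_law N)) prefix_algebra path_value"
  unfolding is_markov_model_def is_model_def
  using measurable_prefix_algebra[OF depends_on_prefix_path_value] sets_prefix_algebra_mono
    martingale_path_value markov_path_value measure_path_value
  by (auto simp: prob_space_measure_pmf subalgebra_def path_value_def grid_proj_range
      atLeast0AtMost marginal_def)

lemma expectation_gain:
  assumes "nonanticipative Delta"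
  shows "measure_pmf.expectation (path_law N) (gain N J x c lam Delta) = 0"
proof -
  let ?E = "measure_pmf.expectation (path_law N)"
  have calls: "?E (\<lambda>w. max (w n - x j) 0) = c j n" if "n \<in> {1..N}" "j \<le> J" for n j
    using that expectation_marginal[of n "\<lambda>v. max (v - x j) 0"] call_marginal[of n j]
    by (simp add: call_def)
  have stock: "?E (\<lambda>w. Delta n w * (w (n+1) - w n)) = 0" if "n < N" for n
  proof -
    have \<Delta>: "depends_on_prefix n (Delta n)"
      using assms unfolding nonanticipative_def depends_on_prefix_def by blast
    have "?E (\<lambda>w. Delta n w * w (Suc n))
        = ?E (\<lambda>w. Delta n w * measure_pmf.expectation (step n (w n)) (\<lambda>v. v))"
      using that \<Delta> by (rule expectation_path_law_step)
    also have "\<dots> = ?E (\<lambda>w. Delta n w * w n)"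
      using that by (intro integral_cong_AE) (auto simp: AE_measure_pmf_iff expectation_step_on_support)
    finally show ?thesis by (simp add: right_diff_distrib)
  qed
  have "(\<Sum>n=1..N. \<Sum>j=0..J. lam j n * (?E (\<lambda>w. max (w n - x j) 0) - c j n)) = 0"
    by (intro sum.neutral ballI) (simp add: calls)
  thus ?thesis
    unfolding gain_def using stock by simp
qed

lemma arbitrage_free: "arbitrage_free N J s0 x c"
  unfolding arbitrage_free_def
proof clarify
  fix lam Delta assume na: "nonanticipative Delta"
    and pos: "\<forall>w. is_path N J s0 x w \<longrightarrow> 0 < gain N J x c lam Delta w"
  have "0 < measure_pmf.expectation (path_law N) (gain N J x c lam Delta)"
    using finite_path_law
  proof (rule expectation_pmf_pos)
    fix w assume "w \<in> set_pmf (path_law N)"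
    with path_law_support have "is_path N J s0 x w" by (auto simp: is_path_def atLeast0AtMost)
    with pos show "0 < gain N J x c lam Delta w" by blast
  qed
  thus False using expectation_gain[OF na] by simp
qed

end

theorem mainTheorem2:
  fixes N J :: nat and t :: "nat \<Rightarrow> real" and s0 :: real
    and x :: "nat \<Rightarrow> real" and c :: "nat \<Rightarrow> nat \<Rightarrow> real"
  assumes "N \<ge> 1" and "J \<ge> 1"
    and "t 0 = 0" and "\<forall>n<N. t n < t (n+1)"
    and "s0 > 0"
    and "x 0 = 0" and "\<forall>j<J. x j < x (j+1)"
    and "conds_C N J s0 x c"
  shows "(\<exists>(M :: (nat \<Rightarrow> real) measure) F X. is_markov_model N J s0 x c M F X)
         \<and> arbitrage_free N J s0 x c"
proof -
  interpret call_prices N J s0 x c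
    using assms by unfold_locales auto
  show ?thesis using markov_model arbitrage_free by blast
qed

end
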